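(* Let $X$ be a subspace of $\beta\omega$ with $\omega\subseteq X$. If $\operatorname{CL}(X)$ is pseudocompact, then $X^\kappa$ is pseudocompact for every cardinal $\kappa$.
   Context: $\beta\omega$ is the Stone–Čech compactification of the discrete space $\omega$. Powers carry the product topology. $\operatorname{CL}(X)$ is the set of nonempty closed subsets of $X$ with the Vietoris topology; pseudocompact means every continuous real-valued function is bounded. *)

theory Defs
  imports "HOL-Analysis.Analysis"
begin

definition nat_ultrafilter :: "nat set set \<Rightarrow> bool" where
  "nat_ultrafilter U \<longleftrightarrow>
     UNIV \<in> U \<and> {} \<notin> U \<and>
     (\<forall>A B. A \<in> U \<and> A \<subseteq> B \<longrightarrow> B \<in> U) \<and>
     (\<forall>A B. A \<in> U \<and> B \<in> U \<longrightarrow> A \<inter> B \<in> U) \<and>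
     (\<forall>A. A \<in> U \<or> - A \<in> U)"

text \<open>The Stone-Cech compactification \<beta>\<omega> of the discrete space \<omega>, realised in
  the standard way as the space of ultrafilters on \<omega> with the Stone topology whose
  basic open sets are the sets of ultrafilters containing a fixed A \<subseteq> \<omega>.\<close>
definition beta_omega :: "nat set set topology" where
  "beta_omega = topology_generated_by
     ((\<lambda>A. {U. nat_ultrafilter U \<and> A \<in> U}) ` UNIV)"

text \<open>The canonical copy of \<omega> in \<beta>\<omega>: principal ultrafilters.\<close>
definition principal_uf :: "nat \<Rightarrow> nat set set" where
  "principal_uf n = {A. n \<in> A}"

definition pseudocompact :: "'a topology \<Rightarrow> bool" where
  "pseudocompact T \<longleftrightarrow>
     (\<forall>f. continuous_map T euclideanreal f \<longrightarrow> bounded (f ` topspace T))"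

definition CL :: "'a topology \<Rightarrow> 'a set set" where
  "CL T = {A. closedin T A \<and> A \<noteq> {}}"

definition vietoris :: "'a topology \<Rightarrow> 'a set topology" where
  "vietoris T = topology_generated_by
     ((\<lambda>U. {A \<in> CL T. A \<subseteq> U}) ` {U. openin T U} \<union>
      (\<lambda>U. {A \<in> CL T. A \<inter> U \<noteq> {}}) ` {U. openin T U})"

end

(* Suppose f is continuous and unbounded on X^I. The sets {|f| > n} are nonempty and open, so each
   contains a cylinder that fixes finitely many coordinates at points of omega. A diagonal
   refinement yields indices m k and pairwise disjoint finite sets E k of naturals such that every
   coordinate sequence along m is eventually constant or eventually lies in E k. The sets E k are
   isolated closed points of CL(X), so pseudocompactness of CL(X) gives them an accumulation point A.
   For a coordinate of the second kind, A contains an ultrafilter extending the tail of that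
   coordinate sequence; for one of the first kind take the constant value. The resulting point of
   X^I is an accumulation point of the cylinders, which is impossible because f is bounded near it. *)

theory Submission
  imports Defs
begin

section \<open>Ultrafilters on \<omega> and the space \<beta>\<omega>\<close>

lemma nat_ultrafilter_not_empty: "nat_ultrafilter U \<Longrightarrow> {} \<notin> U"
  by (simp add: nat_ultrafilter_def)

lemma nat_ultrafilter_Int: "nat_ultrafilter U \<Longrightarrow> A \<in> U \<Longrightarrow> B \<in> U \<Longrightarrow> A \<inter> B \<in> U"
  by (simp add: nat_ultrafilter_def)

lemma nat_ultrafilter_mono: "nat_ultrafilter U \<Longrightarrow> A \<in> U \<Longrightarrow> A \<subseteq> B \<Longrightarrow> B \<in> U"
  by (simp add: nat_ultrafilter_def)

lemma nat_ultrafilter_Compl_iff: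
  assumes "nat_ultrafilter U"
  shows "- A \<in> U \<longleftrightarrow> A \<notin> U"
proof
  assume "- A \<in> U"
  then have "A \<in> U \<Longrightarrow> - A \<inter> A \<in> U" using assms nat_ultrafilter_Int by blast
  then show "A \<notin> U" using assms nat_ultrafilter_not_empty by auto
next
  show "A \<notin> U \<Longrightarrow> - A \<in> U" using assms unfolding nat_ultrafilter_def by blast
qed

lemma nat_ultrafilter_principal_uf: "nat_ultrafilter (principal_uf n)"
  unfolding nat_ultrafilter_def principal_uf_def by blast

lemma inj_principal_uf: "inj principal_uf"
proof (rule injI)
  fix a b assume "principal_uf a = principal_uf b"
  moreover have "{a} \<in> principal_uf a" by (simp add: principal_uf_def)
  ultimately show "a = b" by (simp add: principal_uf_def)
qed

lemma nat_ultrafilter_finite_member_principal: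
  assumes "nat_ultrafilter U" "finite E" "E \<in> U"
  shows "U \<in> principal_uf ` E"
proof -
  have "\<exists>e\<in>E. {e} \<in> U"
    using assms(2,3)
  proof (induction E rule: finite_induct)
    case empty
    then show ?case using assms(1) nat_ultrafilter_not_empty by blast
  next
    case (insert a F)
    have "F \<in> U" if "{a} \<notin> U"
    proof -
      have "insert a F \<inter> - {a} \<in> U"
        using that insert.prems assms(1) nat_ultrafilter_Compl_iff nat_ultrafilter_Int by blast
      then show ?thesis using assms(1) nat_ultrafilter_mono by blast
    qed
    then show ?case using insert.IH by blast
  qed
  then obtain e where "e \<in> E" "{e} \<in> U" by blast
  moreover have "U = principal_uf e"
  proof (intro set_eqI iffI)
    fix B assume "B \<in> U"
    then have "{e} \<inter> B \<noteq> {}"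
      using \<open>{e} \<in> U\<close> assms(1) nat_ultrafilter_Int nat_ultrafilter_not_empty by metis
    then show "B \<in> principal_uf e" by (simp add: principal_uf_def)
  next
    fix B assume "B \<in> principal_uf e"
    then show "B \<in> U" using \<open>{e} \<in> U\<close> assms(1) nat_ultrafilter_mono by (simp add: principal_uf_def)
  qed
  ultimately show ?thesis by blast
qed

definition ufs_containing :: "nat set \<Rightarrow> nat set set set" where
  "ufs_containing A = {U. nat_ultrafilter U \<and> A \<in> U}"

lemma topspace_beta_omega: "topspace beta_omega = {U. nat_ultrafilter U}"
  by (auto simp: beta_omega_def nat_ultrafilter_def)

lemma openin_ufs_containing: "openin beta_omega (ufs_containing A)"
  unfolding beta_omega_def ufs_containing_def by (rule topology_generated_by_Basis) blast

lemma ufs_containing_Int: "ufs_containing (A \<inter> B) = ufs_containing A \<inter> ufs_containing B"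
  unfolding ufs_containing_def using nat_ultrafilter_Int nat_ultrafilter_mono by blast

lemma principal_uf_in_ufs_containing_iff [simp]: "principal_uf n \<in> ufs_containing A \<longleftrightarrow> n \<in> A"
  using nat_ultrafilter_principal_uf by (simp add: ufs_containing_def principal_uf_def)

lemma ufs_containing_finite: "finite E \<Longrightarrow> ufs_containing E = principal_uf ` E"
  using nat_ultrafilter_finite_member_principal nat_ultrafilter_principal_uf
  by (auto simp: ufs_containing_def principal_uf_def)

lemma ufs_containing_Compl: "ufs_containing (- A) = topspace beta_omega - ufs_containing A"
  by (auto simp: topspace_beta_omega ufs_containing_def nat_ultrafilter_Compl_iff)

lemma closedin_ufs_containing: "closedin beta_omega (ufs_containing A)"
proof -
  have "ufs_containing A \<subseteq> topspace beta_omega"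
    by (auto simp: ufs_containing_def topspace_beta_omega)
  then show ?thesis
    using openin_ufs_containing[of "- A"] by (simp add: closedin_def ufs_containing_Compl Diff_Diff_Int Int_absorb1)
qed

lemma openin_beta_omega_imp_basic:
  assumes "openin beta_omega V" "x \<in> V"
  shows "\<exists>A\<in>x. ufs_containing A \<subseteq> V"
proof -
  have "generate_topology_on (range ufs_containing) V"
    using assms(1) by (simp add: beta_omega_def ufs_containing_def[abs_def] openin_topology_generated_by_iff)
  then have "\<forall>x\<in>V. nat_ultrafilter x \<longrightarrow> (\<exists>A\<in>x. ufs_containing A \<subseteq> V)"
  proof induction
    case (Int a b)
    show ?case
    proof (intro ballI impI)
      fix x assume "x \<in> a \<inter> b" "nat_ultrafilter x"
      then obtain A B where "A \<in> x" "ufs_containing A \<subseteq> a" "B \<in> x" "ufs_containing B \<subseteq> b"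
        using Int.IH by blast
      then show "\<exists>C\<in>x. ufs_containing C \<subseteq> a \<inter> b"
        using \<open>nat_ultrafilter x\<close> nat_ultrafilter_Int ufs_containing_Int by blast
    qed
  next
    case (Basis s)
    then show ?case by (auto simp: ufs_containing_def)
  qed blast+
  moreover have "nat_ultrafilter x"
    using assms openin_subset topspace_beta_omega by blast
  ultimately show ?thesis using assms(2) by blast
qed

section \<open>Subspaces of \<beta>\<omega> containing \<omega>\<close>

locale omega_subspace =
  fixes X :: "nat set set set"
  assumes X_subset: "X \<subseteq> topspace beta_omega"
    and range_principal_uf: "range principal_uf \<subseteq> X"
begin

abbreviation Xtop :: "nat set set topology" where
  "Xtop \<equiv> subtopology beta_omega X"

lemma topspace_beta_omega_Int_X [simp]: "topspace beta_omega \<inter> X = X"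
  using X_subset by blast

lemma topspace_Xtop: "topspace Xtop = X"
  by simp

lemma nat_ultrafilter_in_X: "x \<in> X \<Longrightarrow> nat_ultrafilter x"
  using X_subset topspace_beta_omega by blast

lemma principal_uf_in_X [simp]: "principal_uf n \<in> X"
  using range_principal_uf by blast

lemma openin_Xtop_ufs_containing: "openin Xtop (ufs_containing A \<inter> X)"
  using openin_ufs_containing by (auto simp: openin_subtopology)

lemma openin_Xtop_imp_basic:
  assumes "openin Xtop W" "x \<in> W"
  shows "\<exists>A\<in>x. ufs_containing A \<inter> X \<subseteq> W"
proof -
  obtain V where "openin beta_omega V" "W = V \<inter> X"
    using assms(1) by (auto simp: openin_subtopology)
  then show ?thesis using openin_beta_omega_imp_basic assms(2) by blast
qed

lemma ufs_containing_finite_Int_X: "finite E \<Longrightarrow> ufs_containing E \<inter> X = principal_uf ` E"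
  using ufs_containing_finite by auto

lemma openin_Xtop_principal: "finite E \<Longrightarrow> openin Xtop (principal_uf ` E)"
  using openin_Xtop_ufs_containing ufs_containing_finite_Int_X by metis

lemma closedin_Xtop_principal: "finite E \<Longrightarrow> closedin Xtop (principal_uf ` E)"
  using closedin_ufs_containing ufs_containing_finite_Int_X
  by (metis closedin_subtopology inf_commute)

end

section \<open>The Vietoris hyperspace\<close>

lemma topspace_vietoris [simp]: "topspace (vietoris T) = CL T"
proof -
  have "CL T \<subseteq> {A \<in> CL T. A \<subseteq> topspace T}"
    using closedin_subset by (auto simp: CL_def)
  then show ?thesis by (auto simp: vietoris_def)
qed

lemma openin_vietoris_upper: "openin T U \<Longrightarrow> openin (vietoris T) {A \<in> CL T. A \<subseteq> U}"
  unfolding vietoris_def by (rule topology_generated_by_Basis) blast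

lemma openin_vietoris_lower: "openin T U \<Longrightarrow> openin (vietoris T) {A \<in> CL T. A \<inter> U \<noteq> {}}"
  unfolding vietoris_def by (rule topology_generated_by_Basis) blast

lemma openin_vietoris_singleton:
  assumes F: "F \<in> CL T" "finite F" and isolated: "\<And>y. y \<in> F \<Longrightarrow> openin T {y}"
  shows "openin (vietoris T) {F}"
proof -
  define \<N> where "\<N> = insert {A \<in> CL T. A \<subseteq> F} ((\<lambda>y. {A \<in> CL T. A \<inter> {y} \<noteq> {}}) ` F)"
  have "openin T (\<Union>y\<in>F. {y})"
    using isolated by (intro openin_Union) blast
  then have "openin T F" by simp
  then have "openin (vietoris T) {A \<in> CL T. A \<subseteq> F}"
    by (rule openin_vietoris_upper)
  moreover have "openin (vietoris T) {A \<in> CL T. A \<inter> {y} \<noteq> {}}" if "y \<in> F" for y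
    using isolated[OF that] by (rule openin_vietoris_lower)
  ultimately have "openin (vietoris T) M" if "M \<in> \<N>" for M
    using that unfolding \<N>_def by blast
  then have "openin (vietoris T) (\<Inter>\<N>)"
    using F(2) by (intro openin_Inter) (simp_all add: \<N>_def)
  moreover have "\<Inter>\<N> = {F}"
  proof (intro equalityI subsetI)
    fix A assume A: "A \<in> \<Inter>\<N>"
    have "A \<subseteq> F" using A by (simp add: \<N>_def)
    moreover have "F \<subseteq> A" using A by (auto simp: \<N>_def)
    ultimately show "A \<in> {F}" by simp
  qed (use F(1) in \<open>auto simp: \<N>_def\<close>)
  ultimately show ?thesis by simp
qed

lemma closedin_vietoris_singleton:
  assumes F: "F \<in> CL T" and closed_points: "\<And>y. y \<in> F \<Longrightarrow> closedin T {y}"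
  shows "closedin (vietoris T) {F}"
proof -
  have separate: "\<exists>M. openin (vietoris T) M \<and> C \<in> M \<and> F \<notin> M" if C: "C \<in> CL T" "C \<noteq> F" for C
  proof (cases "C \<subseteq> F")
    case True
    then obtain y where y: "y \<in> F" "y \<notin> C" using C(2) by blast
    have "openin T (topspace T - {y})" using closed_points[OF y(1)] by (simp add: closedin_def)
    moreover have "C \<subseteq> topspace T" using C(1) closedin_subset by (auto simp: CL_def)
    ultimately show ?thesis
      using C(1) y by (intro exI[of _ "{A \<in> CL T. A \<subseteq> topspace T - {y}}"] conjI openin_vietoris_upper) auto
  next
    case False
    have "openin T (topspace T - F)" using F by (simp add: CL_def closedin_def)
    moreover have "C \<subseteq> topspace T" using C(1) closedin_subset by (auto simp: CL_def)
    ultimately show ?thesis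
      using C(1) False by (intro exI[of _ "{A \<in> CL T. A \<inter> (topspace T - F) \<noteq> {}}"] conjI openin_vietoris_lower) auto
  qed
  then have "openin (vietoris T) (CL T - {F})"
  proof (subst openin_subopen, intro ballI)
    fix C assume "C \<in> CL T - {F}"
    then obtain M where "openin (vietoris T) M" "C \<in> M" "F \<notin> M"
      using separate by blast
    moreover have "M \<subseteq> CL T"
      using openin_subset[OF \<open>openin (vietoris T) M\<close>] by simp
    ultimately show "\<exists>M. openin (vietoris T) M \<and> C \<in> M \<and> M \<subseteq> CL T - {F}" by blast
  qed
  then show ?thesis using F by (simp add: closedin_def)
qed

section \<open>Pseudocompactness\<close>

lemma continuous_map_locally_constant:
  assumes "f ` topspace X \<subseteq> topspace Y"
    and "\<And>x. x \<in> topspace X \<Longrightarrow> \<exists>N. openin X N \<and> x \<in> N \<and> (\<forall>y\<in>N. f y = f x)"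
  shows "continuous_map X Y f"
  unfolding continuous_map_def
proof (intro conjI allI impI)
  show "f \<in> topspace X \<rightarrow> topspace Y" using assms(1) by blast
  fix U assume "openin Y U"
  show "openin X {x \<in> topspace X. f x \<in> U}"
  proof (subst openin_subopen, intro ballI)
    fix x assume x: "x \<in> {x \<in> topspace X. f x \<in> U}"
    then obtain N where N: "openin X N" "x \<in> N" "\<forall>y\<in>N. f y = f x" using assms(2) by blast
    have "N \<subseteq> {x \<in> topspace X. f x \<in> U}"
      using x N(3) openin_subset[OF N(1)] by auto
    then show "\<exists>N. openin X N \<and> x \<in> N \<and> N \<subseteq> {x \<in> topspace X. f x \<in> U}"
      using N(1,2) by blast
  qed
qed

lemma openin_avoiding_sequence:
  fixes x :: "nat \<Rightarrow> 'a"
  assumes closed: "\<And>k. closedin V {x k}"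
    and N: "openin V N" "p \<in> N" "p \<notin> range x" and tail: "\<And>k. K \<le> k \<Longrightarrow> x k \<notin> N"
  shows "\<exists>N'. openin V N' \<and> p \<in> N' \<and> N' \<inter> range x = {}"
proof -
  have "closedin V (\<Union>k<K. {x k})"
    using closed by (intro closedin_Union) auto
  with N(1) have "openin V (N - (\<Union>k<K. {x k}))"
    by (rule openin_diff)
  moreover have "x k \<notin> N - (\<Union>k<K. {x k})" for k
    using tail[of k] by (cases "K \<le> k") auto
  then have "(N - (\<Union>k<K. {x k})) \<inter> range x = {}" by blast
  moreover have "p \<in> N - (\<Union>k<K. {x k})"
    using N(2,3) by blast
  ultimately show ?thesis by blast
qed

lemma pseudocompact_isolated_sequence_accumulates:
  assumes "pseudocompact V" "inj x"
    and isolated: "\<And>k. openin V {x k}" and closed: "\<And>k. closedin V {x k}"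
  obtains p where "p \<in> topspace V"
    "\<And>N. openin V N \<Longrightarrow> p \<in> N \<Longrightarrow> \<exists>\<^sub>F k in sequentially. x k \<in> N"
proof -
  have "\<exists>p\<in>topspace V. \<forall>N. openin V N \<longrightarrow> p \<in> N \<longrightarrow> (\<exists>\<^sub>F k in sequentially. x k \<in> N)"
  proof (rule ccontr)
    assume "\<not> ?thesis"
    then have far: "\<exists>N K. openin V N \<and> p \<in> N \<and> (\<forall>k\<ge>K. x k \<notin> N)" if "p \<in> topspace V" for p
      using that by (auto simp: frequently_sequentially)
    \<comment> \<open>the index along the sequence is then locally constant, hence continuous, yet unbounded\<close>
    define h where "h p = (if p \<in> range x then real (inv x p) else 0)" for p
    have "\<exists>N. openin V N \<and> p \<in> N \<and> (\<forall>q\<in>N. h q = h p)" if p: "p \<in> topspace V" for p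
    proof (cases "p \<in> range x")
      case True
      then obtain k where "p = x k" by blast
      then show ?thesis using isolated by blast
    next
      case False
      obtain N K where N: "openin V N" "p \<in> N" "\<And>k. K \<le> k \<Longrightarrow> x k \<notin> N"
        using far[OF p] by blast
      then obtain N' where N': "openin V N'" "p \<in> N'" "N' \<inter> range x = {}"
        using openin_avoiding_sequence[OF closed N(1,2) False N(3)] by blast
      then have "\<forall>q\<in>N'. h q = h p"
        using False by (auto simp: h_def)
      then show ?thesis using N'(1,2) by blast
    qed
    then have "continuous_map V euclideanreal h"
      by (intro continuous_map_locally_constant) auto
    then have "bounded (h ` topspace V)"
      using assms(1) by (simp add: pseudocompact_def)
    then obtain B where B: "\<And>p. p \<in> topspace V \<Longrightarrow> \<bar>h p\<bar> \<le> B"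
      by (auto simp: bounded_real)
    define k where "k = nat \<lceil>B\<rceil> + 1"
    have "x k \<in> topspace V"
      using openin_subset[OF isolated[of k]] by simp
    moreover have "h (x k) = real k"
      using assms(2) by (simp add: h_def)
    ultimately show False
      using B[of "x k"] by (simp add: k_def) linarith
  qed
  then show ?thesis using that by blast
qed

lemma pseudocompactI_open_sequences:
  assumes "\<And>U. (\<And>n. openin P (U n)) \<Longrightarrow> (\<And>n. U n \<noteq> {}) \<Longrightarrow>
      \<exists>z\<in>topspace P. \<forall>W. openin P W \<longrightarrow> z \<in> W \<longrightarrow> (\<exists>\<^sub>F n in sequentially. W \<inter> U n \<noteq> {})"
  shows "pseudocompact P"
  unfolding pseudocompact_def
proof (intro allI impI)
  fix f assume f: "continuous_map P euclideanreal f"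
  show "bounded (f ` topspace P)"
  proof (rule ccontr)
    assume unbounded: "\<not> bounded (f ` topspace P)"
    define U where "U n = {y \<in> topspace P. f y \<in> {r. real n < \<bar>r\<bar>}}" for n :: nat
    have "open {r::real. real n < \<bar>r\<bar>}" for n
      by (intro open_Collect_less continuous_intros)
    then have "openin P (U n)" for n
      using openin_continuous_map_preimage[OF f, of "{r. real n < \<bar>r\<bar>}"] by (simp add: U_def)
    moreover have "U n \<noteq> {}" for n
    proof
      assume "U n = {}"
      then have "\<forall>r\<in>f ` topspace P. \<bar>r\<bar> \<le> real n" by (auto simp: U_def not_less)
      then show False using unbounded by (auto simp: bounded_real)
    qed
    ultimately obtain z where z: "z \<in> topspace P"
      and acc: "\<And>W. openin P W \<Longrightarrow> z \<in> W \<Longrightarrow> \<exists>\<^sub>F n in sequentially. W \<inter> U n \<noteq> {}"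
      using assms by blast
    define W where "W = {y \<in> topspace P. f y \<in> {r. \<bar>r - f z\<bar> < 1}}"
    have "open {r::real. \<bar>r - f z\<bar> < 1}"
      by (intro open_Collect_less continuous_intros)
    then have "openin P W"
      using openin_continuous_map_preimage[OF f, of "{r. \<bar>r - f z\<bar> < 1}"] by (simp add: W_def)
    moreover have "z \<in> W" using z by (simp add: W_def)
    ultimately obtain n where "n \<ge> nat \<lceil>\<bar>f z\<bar>\<rceil> + 1" "W \<inter> U n \<noteq> {}"
      using acc unfolding frequently_sequentially by blast
    then obtain y where "n \<ge> nat \<lceil>\<bar>f z\<bar>\<rceil> + 1" "y \<in> W" "y \<in> U n" by blast
    then show False by (simp add: W_def U_def) linarith
  qed
qed

section \<open>Diagonal selection\<close>

definition finite_to_one_on :: "('a \<Rightarrow> 'b) \<Rightarrow> 'a set \<Rightarrow> bool" where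
  "finite_to_one_on f Q \<longleftrightarrow> (\<forall>v. finite {x \<in> Q. f x = v})"

lemma finite_to_one_on_subset:
  assumes "finite_to_one_on f Q" "Q' \<subseteq> Q"
  shows "finite_to_one_on f Q'"
  unfolding finite_to_one_on_def
proof
  fix v
  have "{x \<in> Q'. f x = v} \<subseteq> {x \<in> Q. f x = v}" using assms(2) by blast
  then show "finite {x \<in> Q'. f x = v}"
    using assms(1) finite_subset unfolding finite_to_one_on_def by blast
qed

lemma finite_to_one_on_preimage:
  assumes "finite_to_one_on f Q" "finite P"
  shows "finite {x \<in> Q. f x \<in> P}"
proof -
  have "{x \<in> Q. f x \<in> P} = (\<Union>v\<in>P. {x \<in> Q. f x = v})" by blast
  then show ?thesis using assms by (simp add: finite_to_one_on_def)
qed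

lemma infinite_subset_constant_or_finite_to_one:
  assumes "infinite Q"
  obtains Q' where "Q' \<subseteq> Q" "infinite Q'" "f constant_on Q' \<or> finite_to_one_on f Q'"
proof (cases "finite_to_one_on f Q")
  case True
  then show ?thesis using that[of Q] assms by blast
next
  case False
  then obtain v where "infinite {x \<in> Q. f x = v}" unfolding finite_to_one_on_def by blast
  moreover have "f constant_on {x \<in> Q. f x = v}" unfolding constant_on_def by blast
  ultimately show ?thesis using that[of "{x \<in> Q. f x = v}"] by blast
qed

lemma infinite_subset_constant_or_finite_to_one_family:
  assumes "finite S" "infinite Q"
  obtains Q' where "Q' \<subseteq> Q" "infinite Q'" "\<forall>i\<in>S. g i constant_on Q' \<or> finite_to_one_on (g i) Q'"
  using assms
proof (induction S arbitrary: thesis rule: finite_induct)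
  case empty
  then show ?case by blast
next
  case (insert a S)
  obtain Q1 where Q1: "Q1 \<subseteq> Q" "infinite Q1" "\<forall>i\<in>S. g i constant_on Q1 \<or> finite_to_one_on (g i) Q1"
    using insert.IH insert.prems(2) by blast
  obtain Q2 where Q2: "Q2 \<subseteq> Q1" "infinite Q2" "g a constant_on Q2 \<or> finite_to_one_on (g a) Q2"
    using infinite_subset_constant_or_finite_to_one[OF Q1(2)] by blast
  have "\<forall>i\<in>S. g i constant_on Q2 \<or> finite_to_one_on (g i) Q2"
    using Q1(3) constant_on_subset[OF _ Q2(1)] finite_to_one_on_subset[OF _ Q2(1)] by blast
  then show ?case using insert.prems(1) Q1(1) Q2 by blast
qed

lemma disjoint_family_greedy_choice:
  fixes \<Phi> :: "nat \<Rightarrow> 'a \<Rightarrow> bool" and E :: "nat \<Rightarrow> 'a \<Rightarrow> 'b set"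
  assumes "\<And>k P. finite P \<Longrightarrow> \<exists>x. \<Phi> k x \<and> finite (E k x) \<and> E k x \<inter> P = {}"
  shows "\<exists>x. (\<forall>k. \<Phi> k (x k)) \<and> disjoint_family (\<lambda>k. E k (x k))"
proof -
  obtain f where f: "\<And>n. \<Phi> n (fst (f n)) \<and> finite (snd (f n)) \<and> E n (fst (f n)) \<subseteq> snd (f n)"
    and step: "\<And>n. E (Suc n) (fst (f (Suc n))) \<inter> snd (f n) = {} \<and>
                     snd (f (Suc n)) = snd (f n) \<union> E (Suc n) (fst (f (Suc n)))"
  proof -
    have "\<exists>f. \<forall>n. (\<lambda>n (x, A). \<Phi> n x \<and> finite A \<and> E n x \<subseteq> A) n (f n) \<and>
        (\<lambda>n (x, A) (x', A'). E (Suc n) x' \<inter> A = {} \<and> A' = A \<union> E (Suc n) x') n (f n) (f (Suc n))"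
    proof (rule dependent_nat_choice)
      obtain x where "\<Phi> 0 x" "finite (E 0 x)" using assms[of "{}"] by blast
      then show "\<exists>xA. (\<lambda>n (x, A). \<Phi> n x \<and> finite A \<and> E n x \<subseteq> A) 0 xA"
        by (intro exI[of _ "(x, E 0 x)"]) simp
    next
      fix xA n assume "(\<lambda>n (x, A). \<Phi> n x \<and> finite A \<and> E n x \<subseteq> A) n xA"
      then have "finite (snd xA)" by (simp add: case_prod_beta)
      then obtain x' where "\<Phi> (Suc n) x'" "finite (E (Suc n) x')" "E (Suc n) x' \<inter> snd xA = {}"
        using assms by blast
      then show "\<exists>yB. (\<lambda>n (x, A). \<Phi> n x \<and> finite A \<and> E n x \<subseteq> A) (Suc n) yB \<and>
          (\<lambda>n (x, A) (x', A'). E (Suc n) x' \<inter> A = {} \<and> A' = A \<union> E (Suc n) x') n xA yB"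
        using \<open>finite (snd xA)\<close> by (intro exI[of _ "(x', snd xA \<union> E (Suc n) x')"]) (simp add: case_prod_beta)
    qed
    then show thesis using that by (simp add: case_prod_beta) blast
  qed
  define A where "A n = snd (f n)" for n
  have A_mono: "A j \<subseteq> A k" if "j \<le> k" for j k
    using lift_Suc_mono_le[of A, OF _ that] step by (auto simp: A_def)
  have "E j (fst (f j)) \<inter> E k (fst (f k)) = {}" if "j < k" for j k
  proof -
    obtain k' where k': "k = Suc k'" using \<open>j < k\<close> less_imp_Suc_add by blast
    have "E j (fst (f j)) \<subseteq> A k'"
      using f[of j] A_mono[of j k'] \<open>j < k\<close> k' by (auto simp: A_def)
    then show ?thesis using step[of k'] k' by (auto simp: A_def)
  qed
  then have "disjoint_family (\<lambda>k. E k (fst (f k)))"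
    unfolding disjoint_family_on_def by (metis Int_commute linorder_neqE_nat)
  moreover have "\<Phi> k (fst (f k))" for k using f by blast
  ultimately show ?thesis by (intro exI[of _ "\<lambda>k. fst (f k)"]) simp
qed

lemma decreasing_constant_or_finite_to_one:
  fixes g :: "'i \<Rightarrow> nat \<Rightarrow> 'b" and S :: "nat \<Rightarrow> 'i set"
  assumes S_finite: "\<And>k. finite (S k)"
  shows "\<exists>Q. \<forall>k. (infinite (Q k) \<and> (\<forall>i\<in>S k. g i constant_on Q k \<or> finite_to_one_on (g i) (Q k)))
    \<and> Q (Suc k) \<subseteq> Q k"
proof (rule dependent_nat_choice)
  obtain Q where "Q \<subseteq> UNIV" "infinite Q" "\<forall>i\<in>S 0. g i constant_on Q \<or> finite_to_one_on (g i) Q"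
    by (rule infinite_subset_constant_or_finite_to_one_family[OF S_finite infinite_UNIV_nat])
  then show "\<exists>Q. infinite Q \<and> (\<forall>i\<in>S 0. g i constant_on Q \<or> finite_to_one_on (g i) Q)"
    by blast
next
  fix Q k assume "infinite Q \<and> (\<forall>i\<in>S k. g i constant_on Q \<or> finite_to_one_on (g i) Q)"
  then obtain Q' where "Q' \<subseteq> Q" "infinite Q'"
    "\<forall>i\<in>S (Suc k). g i constant_on Q' \<or> finite_to_one_on (g i) Q'"
    using infinite_subset_constant_or_finite_to_one_family[OF S_finite] by blast
  then show "\<exists>Q'. (infinite Q' \<and> (\<forall>i\<in>S (Suc k). g i constant_on Q' \<or> finite_to_one_on (g i) Q'))
      \<and> Q' \<subseteq> Q"
    by blast
qed

lemma diagonal_selection: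
  fixes g :: "'i \<Rightarrow> nat \<Rightarrow> nat" and J :: "nat \<Rightarrow> 'i set"
  assumes "\<And>n. finite (J n)"
  obtains m :: "nat \<Rightarrow> nat" and E :: "nat \<Rightarrow> nat set"
  where "\<And>k. k \<le> m k" "\<And>k. finite (E k)" "\<And>k. E k \<noteq> {}" "disjoint_family E"
    "\<And>i n. i \<in> J n \<Longrightarrow>
       (\<exists>c. \<forall>\<^sub>F k in sequentially. g i (m k) = c) \<or> (\<forall>\<^sub>F k in sequentially. g i (m k) \<in> E k)"
proof -
  define S where "S k = (\<Union>n\<le>k. J n)" for k
  have S_finite: "finite (S k)" for k
    using assms by (simp add: S_def)
  have S_mono: "S k \<subseteq> S k'" if "k \<le> k'" for k k'
    using that unfolding S_def by (intro UN_mono) auto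
  obtain Q where "\<forall>k. (infinite (Q k) \<and> (\<forall>i\<in>S k. g i constant_on Q k \<or> finite_to_one_on (g i) (Q k)))
      \<and> Q (Suc k) \<subseteq> Q k"
    using decreasing_constant_or_finite_to_one[where S=S and g=g, OF S_finite] by (elim exE)
  then have Q: "\<And>k. infinite (Q k)"
    and Q_tame: "\<And>k i. i \<in> S k \<Longrightarrow> g i constant_on Q k \<or> finite_to_one_on (g i) (Q k)"
    and Q_Suc: "\<And>k. Q (Suc k) \<subseteq> Q k"
    by blast+
  have Q_anti: "Q k' \<subseteq> Q k" if "k \<le> k'" for k k'
    using lift_Suc_antimono_le[of Q, OF Q_Suc that] .
  define V where "V k x = insert x ((\<lambda>i. g i x) ` {i \<in> S k. finite_to_one_on (g i) (Q k)})" for k x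
  have "\<exists>x. (x \<in> Q k \<and> k \<le> x) \<and> finite (V k x) \<and> V k x \<inter> P = {}" if "finite P" for k P
  proof -
    define Bad where "Bad = {..<k} \<union> P \<union>
      (\<Union>i\<in>{i \<in> S k. finite_to_one_on (g i) (Q k)}. {x \<in> Q k. g i x \<in> P})"
    have "finite Bad"
      using S_finite[of k] \<open>finite P\<close> finite_to_one_on_preimage by (auto simp: Bad_def)
    then have "Q k - Bad \<noteq> {}"
      using Q[of k] by (metis Diff_infinite_finite finite.emptyI)
    then obtain x where "x \<in> Q k" "x \<notin> Bad" by blast
    moreover have "finite (V k x)" using S_finite[of k] by (simp add: V_def)
    ultimately show ?thesis by (intro exI[of _ x]) (auto simp: Bad_def V_def)
  qed
  then obtain m where m: "\<And>k. m k \<in> Q k \<and> k \<le> m k" and disj: "disjoint_family (\<lambda>k. V k (m k))"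
    using disjoint_family_greedy_choice[where \<Phi>="\<lambda>k x. x \<in> Q k \<and> k \<le> x" and E=V] by blast
  show ?thesis
  proof (rule that[of m "\<lambda>k. V k (m k)"])
    show "k \<le> m k" "finite (V k (m k))" "V k (m k) \<noteq> {}" for k
      using m S_finite[of k] by (auto simp: V_def)
    show "disjoint_family (\<lambda>k. V k (m k))" by (rule disj)
  next
    fix i n assume "i \<in> J n"
    then have "i \<in> S n" by (auto simp: S_def)
    then consider "g i constant_on Q n" | "finite_to_one_on (g i) (Q n)"
      using Q_tame by auto
    then show "(\<exists>c. \<forall>\<^sub>F k in sequentially. g i (m k) = c) \<or> (\<forall>\<^sub>F k in sequentially. g i (m k) \<in> V k (m k))"
    proof cases
      case 1
      then obtain c where "\<forall>x\<in>Q n. g i x = c" by (auto simp: constant_on_def)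
      then have "\<forall>k\<ge>n. g i (m k) = c" using m Q_anti by blast
      then show ?thesis unfolding eventually_sequentially by blast
    next
      case 2
      have "g i (m k) \<in> V k (m k)" if "n \<le> k" for k
        using \<open>i \<in> S n\<close> S_mono[OF that] finite_to_one_on_subset[OF 2 Q_anti[OF that]]
        by (auto simp: V_def)
      then show ?thesis unfolding eventually_sequentially by blast
    qed
  qed
qed

section \<open>Accumulation in the hyperspace and in products\<close>

context omega_subspace
begin

lemma principal_sets_accumulate_in_CL:
  assumes "pseudocompact (vietoris Xtop)"
    and E: "\<And>k. finite (E k)" "\<And>k. E k \<noteq> {}" "disjoint_family E"
  obtains A where "A \<in> CL Xtop"
    "\<And>M. openin (vietoris Xtop) M \<Longrightarrow> A \<in> M \<Longrightarrow> \<exists>\<^sub>F k in sequentially. principal_uf ` E k \<in> M"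
proof -
  define F where "F k = principal_uf ` E k" for k
  have F_CL: "F k \<in> CL Xtop" for k
    using closedin_Xtop_principal[OF E(1)] E(2) by (simp add: CL_def F_def)
  have "inj F"
  proof (rule injI)
    fix k k' assume "F k = F k'"
    then have "E k = E k'" using inj_principal_uf by (simp add: F_def inj_image_eq_iff)
    then show "k = k'" using E(2)[of k] E(3) by (auto simp: disjoint_family_on_def)
  qed
  moreover have "openin (vietoris Xtop) {F k}" for k
    using F_CL E(1) openin_Xtop_principal[of "{_}"] by (intro openin_vietoris_singleton) (auto simp: F_def)
  moreover have "closedin (vietoris Xtop) {F k}" for k
    using F_CL closedin_Xtop_principal[of "{_}"] by (intro closedin_vietoris_singleton) (auto simp: F_def)
  ultimately obtain A where "A \<in> topspace (vietoris Xtop)"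
    "\<And>M. openin (vietoris Xtop) M \<Longrightarrow> A \<in> M \<Longrightarrow> \<exists>\<^sub>F k in sequentially. F k \<in> M"
    using pseudocompact_isolated_sequence_accumulates[OF assms(1)] by blast
  then show ?thesis using that by (simp add: F_def)
qed

lemma accumulation_meets_tail:
  assumes A: "A \<in> CL Xtop"
    and acc: "\<And>M. openin (vietoris Xtop) M \<Longrightarrow> A \<in> M \<Longrightarrow> \<exists>\<^sub>F k in sequentially. principal_uf ` E k \<in> M"
    and tail: "\<And>k. N \<le> k \<Longrightarrow> s k \<in> E k"
  shows "A \<inter> ufs_containing (s ` {N..}) \<noteq> {}"
proof
  assume disjoint: "A \<inter> ufs_containing (s ` {N..}) = {}"
  have A_X: "A \<subseteq> X" using A closedin_subset by (force simp: CL_def)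
  have "A \<subseteq> ufs_containing (- s ` {N..}) \<inter> X"
  proof
    fix a assume "a \<in> A"
    then have "nat_ultrafilter a" "a \<in> X" using A_X nat_ultrafilter_in_X by auto
    moreover have "s ` {N..} \<notin> a"
      using disjoint \<open>a \<in> A\<close> \<open>nat_ultrafilter a\<close> by (auto simp: ufs_containing_def)
    ultimately show "a \<in> ufs_containing (- s ` {N..}) \<inter> X"
      by (simp add: ufs_containing_def nat_ultrafilter_Compl_iff)
  qed
  then have "A \<in> {D \<in> CL Xtop. D \<subseteq> ufs_containing (- s ` {N..}) \<inter> X}"
    using A by blast
  then have "\<exists>\<^sub>F k in sequentially. principal_uf ` E k \<in> {D \<in> CL Xtop. D \<subseteq> ufs_containing (- s ` {N..}) \<inter> X}"
    by (rule acc[OF openin_vietoris_upper[OF openin_Xtop_ufs_containing]])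
  then obtain k where "k \<ge> N"
    and "principal_uf ` E k \<in> {D \<in> CL Xtop. D \<subseteq> ufs_containing (- s ` {N..}) \<inter> X}"
    unfolding frequently_sequentially by blast
  then have "principal_uf (s k) \<in> ufs_containing (- s ` {N..})" using tail[of k] by blast
  then show False using \<open>k \<ge> N\<close> by simp
qed

definition tracking_point :: "nat set set set \<Rightarrow> (nat \<Rightarrow> nat set) \<Rightarrow> (nat \<Rightarrow> nat) \<Rightarrow> nat set set \<Rightarrow> bool" where
  "tracking_point A E s z \<longleftrightarrow> (\<forall>C\<in>z. \<exists>M. openin (vietoris Xtop) M \<and> A \<in> M \<and>
     (\<forall>\<^sub>F k in sequentially. principal_uf ` E k \<in> M \<longrightarrow> s k \<in> C))"

lemma accumulation_tracks_sequence:
  assumes A: "A \<in> CL Xtop"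
    and acc: "\<And>M. openin (vietoris Xtop) M \<Longrightarrow> A \<in> M \<Longrightarrow> \<exists>\<^sub>F k in sequentially. principal_uf ` E k \<in> M"
    and disj: "disjoint_family E"
    and s: "(\<exists>c. \<forall>\<^sub>F k in sequentially. s k = c) \<or> (\<forall>\<^sub>F k in sequentially. s k \<in> E k)"
  shows "\<exists>z\<in>X. tracking_point A E s z"
  using s
proof (elim disjE exE)
  fix c assume c: "\<forall>\<^sub>F k in sequentially. s k = c"
  show ?thesis
    unfolding tracking_point_def
  proof (intro bexI[of _ "principal_uf c"] ballI)
    fix C assume "C \<in> principal_uf c"
    then have "\<forall>\<^sub>F k in sequentially. s k \<in> C"
      using c by (auto simp: principal_uf_def elim: eventually_mono)
    then show "\<exists>M. openin (vietoris Xtop) M \<and> A \<in> M \<and>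
        (\<forall>\<^sub>F k in sequentially. principal_uf ` E k \<in> M \<longrightarrow> s k \<in> C)"
      using A openin_topspace[of "vietoris Xtop"]
      by (intro exI[of _ "topspace (vietoris Xtop)"]) (auto elim: eventually_mono)
  qed simp
next
  assume "\<forall>\<^sub>F k in sequentially. s k \<in> E k"
  then obtain N where tail: "\<And>k. N \<le> k \<Longrightarrow> s k \<in> E k"
    unfolding eventually_sequentially by blast
  define B where "B = s ` {N..}"
  obtain z where z: "z \<in> A" "B \<in> z"
    using accumulation_meets_tail[OF A acc tail] by (auto simp: B_def ufs_containing_def)
  have z_X: "z \<in> X" using A z(1) closedin_subset by (force simp: CL_def)
  show ?thesis
    unfolding tracking_point_def
  proof (intro bexI[OF _ z_X] ballI)
    fix C assume "C \<in> z"
    define M where "M = {D \<in> CL Xtop. D \<inter> (ufs_containing (C \<inter> B) \<inter> X) \<noteq> {}}"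
    have "openin (vietoris Xtop) M"
      unfolding M_def by (rule openin_vietoris_lower[OF openin_Xtop_ufs_containing])
    moreover have "A \<in> M"
      using A z z_X \<open>C \<in> z\<close> nat_ultrafilter_in_X nat_ultrafilter_Int
      by (auto simp: M_def ufs_containing_def)
    \<comment> \<open>a point of E k in the tail B must be s k itself, since the E k are disjoint\<close>
    moreover have "s k \<in> C" if inM: "principal_uf ` E k \<in> M" for k
    proof -
      obtain e where e: "e \<in> E k" "e \<in> C" "e \<in> B"
        using inM by (auto simp: M_def)
      then obtain k' where "N \<le> k'" "e = s k'" by (auto simp: B_def)
      then have "k' = k"
        using tail[of k'] e(1) disj by (auto simp: disjoint_family_on_def)
      then show ?thesis using e(2) \<open>e = s k'\<close> by simp
    qed
    ultimately show "\<exists>M. openin (vietoris Xtop) M \<and> A \<in> M \<and>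
        (\<forall>\<^sub>F k in sequentially. principal_uf ` E k \<in> M \<longrightarrow> s k \<in> C)"
      unfolding eventually_sequentially by blast
  qed
qed

lemma tracking_points_accumulate:
  assumes A: "A \<in> CL Xtop"
    and acc: "\<And>M. openin (vietoris Xtop) M \<Longrightarrow> A \<in> M \<Longrightarrow> \<exists>\<^sub>F k in sequentially. principal_uf ` E k \<in> M"
    and G: "finite G" and tracks: "\<And>i. i \<in> G \<Longrightarrow> tracking_point A E (s i) (z i)"
    and C: "\<And>i. i \<in> G \<Longrightarrow> C i \<in> z i"
  shows "\<exists>\<^sub>F k in sequentially. \<forall>i\<in>G. s i k \<in> C i"
proof -
  have "\<forall>i. \<exists>M. i \<in> G \<longrightarrow> openin (vietoris Xtop) M \<and> A \<in> M \<and>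
      (\<forall>\<^sub>F k in sequentially. principal_uf ` E k \<in> M \<longrightarrow> s i k \<in> C i)"
  proof
    fix i
    show "\<exists>M. i \<in> G \<longrightarrow> openin (vietoris Xtop) M \<and> A \<in> M \<and>
        (\<forall>\<^sub>F k in sequentially. principal_uf ` E k \<in> M \<longrightarrow> s i k \<in> C i)"
    proof (cases "i \<in> G")
      case True
      then show ?thesis using tracks[OF True] C[OF True] unfolding tracking_point_def by blast
    qed simp
  qed
  then obtain M where "\<forall>i. i \<in> G \<longrightarrow> openin (vietoris Xtop) (M i) \<and> A \<in> M i \<and>
      (\<forall>\<^sub>F k in sequentially. principal_uf ` E k \<in> M i \<longrightarrow> s i k \<in> C i)"
    by (rule choice[THEN exE])
  then have M: "\<And>i. i \<in> G \<Longrightarrow> openin (vietoris Xtop) (M i) \<and> A \<in> M i \<and>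
      (\<forall>\<^sub>F k in sequentially. principal_uf ` E k \<in> M i \<longrightarrow> s i k \<in> C i)"
    by blast
  define MG where "MG = \<Inter> (insert (CL Xtop) (M ` G))"
  have "openin (vietoris Xtop) N" if "N \<in> insert (CL Xtop) (M ` G)" for N
    using that M openin_topspace[of "vietoris Xtop"] by auto
  then have "openin (vietoris Xtop) MG"
    using G unfolding MG_def by (intro openin_Inter) simp_all
  moreover have "A \<in> MG" using A M by (auto simp: MG_def)
  ultimately have "\<exists>\<^sub>F k in sequentially. principal_uf ` E k \<in> MG"
    by (rule acc)
  moreover have "\<forall>\<^sub>F k in sequentially. \<forall>i\<in>G. principal_uf ` E k \<in> M i \<longrightarrow> s i k \<in> C i"
    using G M by (intro eventually_ball_finite) auto
  ultimately show ?thesis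
    by (rule frequently_eventually_frequently[THEN frequently_elim1]) (auto simp: MG_def)
qed

lemma common_accumulation_point:
  assumes "pseudocompact (vietoris Xtop)"
    and E: "\<And>k. finite (E k)" "\<And>k. E k \<noteq> {}" "disjoint_family E"
    and s: "\<And>i. i \<in> D \<Longrightarrow>
      (\<exists>c. \<forall>\<^sub>F k in sequentially. s i k = c) \<or> (\<forall>\<^sub>F k in sequentially. s i k \<in> E k)"
  obtains z where "\<And>i. z i \<in> X"
    "\<And>G C. finite G \<Longrightarrow> G \<subseteq> D \<Longrightarrow> (\<And>i. i \<in> G \<Longrightarrow> C i \<in> z i) \<Longrightarrow>
       \<exists>\<^sub>F k in sequentially. \<forall>i\<in>G. s i k \<in> C i"
proof -
  obtain A where A: "A \<in> CL Xtop"
    and acc: "\<And>M. openin (vietoris Xtop) M \<Longrightarrow> A \<in> M \<Longrightarrow> \<exists>\<^sub>F k in sequentially. principal_uf ` E k \<in> M"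
    using principal_sets_accumulate_in_CL[OF assms(1) E] by blast
  have "\<forall>i. \<exists>z. z \<in> X \<and> (i \<in> D \<longrightarrow> tracking_point A E (s i) z)"
  proof
    fix i show "\<exists>z. z \<in> X \<and> (i \<in> D \<longrightarrow> tracking_point A E (s i) z)"
    proof (cases "i \<in> D")
      case True
      then show ?thesis using accumulation_tracks_sequence[OF A acc E(3) s[OF True]] by blast
    qed (use principal_uf_in_X in blast)
  qed
  then obtain z where z: "\<forall>i. z i \<in> X \<and> (i \<in> D \<longrightarrow> tracking_point A E (s i) (z i))"
    by (rule choice[THEN exE])
  show ?thesis
  proof (rule that)
    show "z i \<in> X" for i using z by blast
    fix G C assume "finite G" "G \<subseteq> D" "\<And>i. i \<in> G \<Longrightarrow> C i \<in> z i"
    then show "\<exists>\<^sub>F k in sequentially. \<forall>i\<in>G. s i k \<in> C i"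
      using z by (intro tracking_points_accumulate[OF A acc]) auto
  qed
qed

definition ufs_box :: "'i set \<Rightarrow> 'i set \<Rightarrow> ('i \<Rightarrow> nat set) \<Rightarrow> ('i \<Rightarrow> nat set set) set" where
  "ufs_box I G C = {y \<in> topspace (product_topology (\<lambda>i. Xtop) I). \<forall>i\<in>G. y i \<in> ufs_containing (C i)}"

definition principal_cylinder :: "'i set \<Rightarrow> 'i set \<Rightarrow> ('i \<Rightarrow> nat) \<Rightarrow> ('i \<Rightarrow> nat set set) set" where
  "principal_cylinder I F a = {y \<in> topspace (product_topology (\<lambda>i. Xtop) I). \<forall>i\<in>F. y i = principal_uf (a i)}"

lemma openin_product_imp_basic:
  assumes "openin (product_topology (\<lambda>i. Xtop) I) W" "z \<in> W"
  shows "\<exists>G C. finite G \<and> G \<subseteq> I \<and> (\<forall>i\<in>G. C i \<in> z i) \<and> ufs_box I G C \<subseteq> W"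
proof -
  have "\<forall>x\<in>W. \<exists>U. finite {i \<in> I. U i \<noteq> topspace Xtop} \<and> (\<forall>i\<in>I. openin Xtop (U i)) \<and>
      x \<in> Pi\<^sub>E I U \<and> Pi\<^sub>E I U \<subseteq> W"
    using assms(1) by (simp only: openin_product_topology_alt)
  then have "\<exists>U. finite {i \<in> I. U i \<noteq> X} \<and> (\<forall>i\<in>I. openin Xtop (U i)) \<and>
      z \<in> Pi\<^sub>E I U \<and> Pi\<^sub>E I U \<subseteq> W"
    using assms(2) by (simp only: topspace_Xtop)
  then obtain U where U: "finite {i \<in> I. U i \<noteq> X}" "\<forall>i\<in>I. openin Xtop (U i)"
    "z \<in> Pi\<^sub>E I U" "Pi\<^sub>E I U \<subseteq> W"
    by blast
  have "\<forall>i. \<exists>C. i \<in> I \<longrightarrow> C \<in> z i \<and> ufs_containing C \<inter> X \<subseteq> U i"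
  proof
    fix i
    show "\<exists>C. i \<in> I \<longrightarrow> C \<in> z i \<and> ufs_containing C \<inter> X \<subseteq> U i"
    proof (cases "i \<in> I")
      case True
      then have "z i \<in> U i" using U(3) by (simp add: PiE_iff)
      then show ?thesis using openin_Xtop_imp_basic U(2) True by blast
    qed simp
  qed
  then obtain C where C: "\<forall>i. i \<in> I \<longrightarrow> C i \<in> z i \<and> ufs_containing (C i) \<inter> X \<subseteq> U i"
    by (rule choice[THEN exE])
  define G where "G = {i \<in> I. U i \<noteq> X}"
  have "ufs_box I G C \<subseteq> Pi\<^sub>E I U"
  proof
    fix y assume y: "y \<in> ufs_box I G C"
    have y_X: "y \<in> Pi\<^sub>E I (\<lambda>i. X)" using y by (simp add: ufs_box_def)
    have "y i \<in> U i" if "i \<in> I" for i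
    proof (cases "i \<in> G")
      case True
      then have "y i \<in> ufs_containing (C i) \<inter> X"
        using y y_X that by (auto simp: ufs_box_def)
      then show ?thesis using C that by blast
    next
      case False
      then show ?thesis using y_X that by (auto simp: G_def)
    qed
    then show "y \<in> Pi\<^sub>E I U" using y_X by (simp add: PiE_iff)
  qed
  then have basic_W: "ufs_box I G C \<subseteq> W" using U(4) by (rule subset_trans)
  have G: "finite G" "G \<subseteq> I" using U(1) by (auto simp: G_def)
  moreover have "\<forall>i\<in>G. C i \<in> z i" using C by (simp add: G_def)
  ultimately have "finite G \<and> G \<subseteq> I \<and> (\<forall>i\<in>G. C i \<in> z i) \<and> ufs_box I G C \<subseteq> W"
    using G basic_W by simp
  then show ?thesis by (rule exI[of _ G, OF exI[of _ C]])
qed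

lemma openin_product_contains_principal_cylinder:
  assumes "openin (product_topology (\<lambda>i. Xtop) I) W" "W \<noteq> {}"
  shows "\<exists>F a. finite F \<and> F \<subseteq> I \<and> principal_cylinder I F a \<subseteq> W"
proof -
  obtain z where "z \<in> W" using assms(2) by blast
  obtain G C where G: "finite G" "G \<subseteq> I" and C: "\<forall>i\<in>G. C i \<in> z i"
    and basic: "ufs_box I G C \<subseteq> W"
    using openin_product_imp_basic[OF assms(1) \<open>z \<in> W\<close>] by (elim exE conjE)
  have z: "z \<in> topspace (product_topology (\<lambda>i. Xtop) I)"
    using openin_subset[OF assms(1)] \<open>z \<in> W\<close> by blast
  have "\<forall>i. \<exists>n. i \<in> G \<longrightarrow> n \<in> C i"
  proof
    fix i
    show "\<exists>n. i \<in> G \<longrightarrow> n \<in> C i"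
    proof (cases "i \<in> G")
      case True
      then have "nat_ultrafilter (z i)"
        using z G(2) nat_ultrafilter_in_X by (auto simp: PiE_iff)
      then have "{} \<notin> z i" by (rule nat_ultrafilter_not_empty)
      then have "C i \<noteq> {}" using C True by auto
      then show ?thesis by blast
    qed simp
  qed
  then obtain a where a: "\<forall>i. i \<in> G \<longrightarrow> a i \<in> C i"
    by (rule choice[THEN exE])
  have "principal_cylinder I G a \<subseteq> ufs_box I G C"
    using a by (auto simp: principal_cylinder_def ufs_box_def)
  then have "principal_cylinder I G a \<subseteq> W"
    using basic by (rule subset_trans)
  with G have "finite G \<and> G \<subseteq> I \<and> principal_cylinder I G a \<subseteq> W" by simp
  then show ?thesis by (rule exI[of _ G, OF exI[of _ a]])
qed

lemma ufs_box_meets_principal_cylinder: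
  assumes z: "\<And>i. z i \<in> X" and C: "\<And>i. i \<in> G \<Longrightarrow> C i \<in> z i"
    and a: "\<forall>i\<in>G \<inter> F. a i \<in> C i" and "G \<subseteq> I" "F \<subseteq> I"
  shows "ufs_box I G C \<inter> principal_cylinder I F a \<noteq> {}"
proof -
  define y where "y = restrict (\<lambda>i. if i \<in> F then principal_uf (a i) else z i) I"
  have "y \<in> topspace (product_topology (\<lambda>i. Xtop) I)"
    using z by (simp add: y_def)
  moreover have "y i \<in> ufs_containing (C i)" if "i \<in> G" for i
  proof (cases "i \<in> F")
    case True
    then show ?thesis using a that \<open>G \<subseteq> I\<close> by (auto simp: y_def)
  next
    case False
    have "nat_ultrafilter (z i)" using z nat_ultrafilter_in_X by blast
    then show ?thesis using False that C \<open>G \<subseteq> I\<close> by (auto simp: y_def ufs_containing_def)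
  qed
  ultimately have "y \<in> ufs_box I G C"
    by (auto simp: ufs_box_def)
  moreover have "y \<in> principal_cylinder I F a"
    using \<open>y \<in> topspace (product_topology (\<lambda>i. Xtop) I)\<close> \<open>F \<subseteq> I\<close>
    unfolding principal_cylinder_def by (auto simp: y_def)
  ultimately show ?thesis by blast
qed

lemma principal_cylinders_accumulate:
  assumes "pseudocompact (vietoris Xtop)"
    and F: "\<And>n. finite (F n)" "\<And>n. F n \<subseteq> I"
  shows "\<exists>z\<in>topspace (product_topology (\<lambda>i. Xtop) I). \<forall>W. openin (product_topology (\<lambda>i. Xtop) I) W \<longrightarrow>
    z \<in> W \<longrightarrow> (\<exists>\<^sub>F n in sequentially. W \<inter> principal_cylinder I (F n) (a n) \<noteq> {})"
proof -
  obtain m E where m: "\<And>k. k \<le> m k" and E: "\<And>k. finite (E k)" "\<And>k. E k \<noteq> {}" "disjoint_family E"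
    and tame: "\<And>i n. i \<in> F n \<Longrightarrow>
       (\<exists>c. \<forall>\<^sub>F k in sequentially. a (m k) i = c) \<or> (\<forall>\<^sub>F k in sequentially. a (m k) i \<in> E k)"
    by (rule diagonal_selection[of F "\<lambda>i n. a n i", OF F(1)]) blast
  have "(\<exists>c. \<forall>\<^sub>F k in sequentially. a (m k) i = c) \<or> (\<forall>\<^sub>F k in sequentially. a (m k) i \<in> E k)"
    if "i \<in> (\<Union>n. F n)" for i
    using that tame by blast
  then obtain z where z_X: "\<And>i. z i \<in> X"
    and z_acc: "\<And>G C. finite G \<Longrightarrow> G \<subseteq> (\<Union>n. F n) \<Longrightarrow> (\<And>i. i \<in> G \<Longrightarrow> C i \<in> z i) \<Longrightarrow>
       \<exists>\<^sub>F k in sequentially. \<forall>i\<in>G. a (m k) i \<in> C i"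
  proof (rule common_accumulation_point[OF assms(1) E])
    fix z assume "\<And>i. z i \<in> X" "\<And>G C. finite G \<Longrightarrow> G \<subseteq> (\<Union>n. F n) \<Longrightarrow>
       (\<And>i. i \<in> G \<Longrightarrow> C i \<in> z i) \<Longrightarrow> \<exists>\<^sub>F k in sequentially. \<forall>i\<in>G. a (m k) i \<in> C i"
    then show thesis by (rule that)
  qed
  have "restrict z I \<in> topspace (product_topology (\<lambda>i. Xtop) I)" using z_X by simp
  moreover have "\<exists>\<^sub>F n in sequentially. W \<inter> principal_cylinder I (F n) (a n) \<noteq> {}"
    if W: "openin (product_topology (\<lambda>i. Xtop) I) W" "restrict z I \<in> W" for W
  proof -
    obtain G C where G: "finite G" "G \<subseteq> I" and C: "\<forall>i\<in>G. C i \<in> restrict z I i"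
      and basic: "ufs_box I G C \<subseteq> W"
      using openin_product_imp_basic[OF W] by (elim exE conjE)
    have C_z: "C i \<in> z i" if "i \<in> G" for i
      using bspec[OF C that] G(2) that by auto
    have "\<exists>\<^sub>F k in sequentially. \<forall>i\<in>G \<inter> (\<Union>n. F n). a (m k) i \<in> C i"
      using G(1) C_z by (intro z_acc) auto
    moreover have "W \<inter> principal_cylinder I (F n) (a n) \<noteq> {}" if "\<forall>i\<in>G \<inter> F n. a n i \<in> C i" for n
      using ufs_box_meets_principal_cylinder[OF z_X C_z that G(2) F(2)] basic by blast
    ultimately have "\<exists>\<^sub>F k in sequentially. W \<inter> principal_cylinder I (F (m k)) (a (m k)) \<noteq> {}"
      by (rule frequently_elim1) blast
    then show ?thesis
      unfolding frequently_sequentially by (meson le_trans m)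
  qed
  ultimately show ?thesis by blast
qed

lemma product_open_sequences_accumulate:
  assumes "pseudocompact (vietoris Xtop)"
    and U: "\<And>n. openin (product_topology (\<lambda>i. Xtop) I) (U n)" "\<And>n. U n \<noteq> {}"
  shows "\<exists>z\<in>topspace (product_topology (\<lambda>i. Xtop) I).
    \<forall>W. openin (product_topology (\<lambda>i. Xtop) I) W \<longrightarrow> z \<in> W \<longrightarrow> (\<exists>\<^sub>F n in sequentially. W \<inter> U n \<noteq> {})"
proof -
  have "\<forall>n. \<exists>Fa. finite (fst Fa) \<and> fst Fa \<subseteq> I \<and> principal_cylinder I (fst Fa) (snd Fa) \<subseteq> U n"
    using openin_product_contains_principal_cylinder[OF U] by simp
  then obtain Fa where Fa: "\<forall>n. finite (fst (Fa n)) \<and> fst (Fa n) \<subseteq> I \<and>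
      principal_cylinder I (fst (Fa n)) (snd (Fa n)) \<subseteq> U n"
    by (rule choice[THEN exE])
  then obtain z where "z \<in> topspace (product_topology (\<lambda>i. Xtop) I)"
    and acc: "\<And>W. openin (product_topology (\<lambda>i. Xtop) I) W \<Longrightarrow> z \<in> W \<Longrightarrow>
      \<exists>\<^sub>F n in sequentially. W \<inter> principal_cylinder I (fst (Fa n)) (snd (Fa n)) \<noteq> {}"
    using principal_cylinders_accumulate[OF assms(1), of "\<lambda>n. fst (Fa n)" I "\<lambda>n. snd (Fa n)"] by blast
  moreover have "\<exists>\<^sub>F n in sequentially. W \<inter> U n \<noteq> {}"
    if "openin (product_topology (\<lambda>i. Xtop) I) W" "z \<in> W" for W
    using acc[OF that] Fa by (auto elim!: frequently_elim1)
  ultimately show ?thesis by blast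
qed

end

theorem corollary4p2:
  fixes X :: "nat set set set" and I :: "'i set"
  assumes "X \<subseteq> topspace beta_omega"
    and "range principal_uf \<subseteq> X"
    and "pseudocompact (vietoris (subtopology beta_omega X))"
  shows "pseudocompact (product_topology (\<lambda>i. subtopology beta_omega X) I)"
proof -
  interpret omega_subspace X
    using assms(1,2) by unfold_locales
  show ?thesis
    using product_open_sequences_accumulate[OF assms(3)] by (rule pseudocompactI_open_sequences)
qed

end
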